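(* Let $S$ be a monoid and $A_S$ an artinian projective right $S$-act, and let $T=\mathrm{End}(A_S)$ (a monoid under composition). Then $T$ satisfies the descending chain condition on principal right ideals $fT$, $f\in T$.
   Context: $A_S$ is artinian if its congruences satisfy the descending chain condition. $A_S$ is projective if for every surjective homomorphism $g:B\to C$ and every homomorphism $h:A\to C$ there is $k:A\to B$ with $gk=h$. In $T$, the product $fg$ denotes the composition $f\circ g$, and $fT=\{f\circ g: g\in T\}$. *)

theory Defs
  imports "HOL-Library.FuncSet"
begin

text \<open>The monoid S is the whole type 's (class monoid_mult). A right S-act is a carrier
  set A together with an action map act :: 'a => 's => 'a, written a.s = act a s.\<close>

definition right_act :: "'a set \<Rightarrow> ('a \<Rightarrow> 's::monoid_mult \<Rightarrow> 'a) \<Rightarrow> bool" where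
  "right_act A act \<longleftrightarrow>
     (\<forall>a\<in>A. \<forall>s. act a s \<in> A) \<and>
     (\<forall>a\<in>A. act a 1 = a) \<and>
     (\<forall>a\<in>A. \<forall>s t. act (act a s) t = act a (s * t))"

definition act_hom ::
  "'a set \<Rightarrow> ('a \<Rightarrow> 's::monoid_mult \<Rightarrow> 'a) \<Rightarrow> 'b set \<Rightarrow> ('b \<Rightarrow> 's \<Rightarrow> 'b) \<Rightarrow> ('a \<Rightarrow> 'b) \<Rightarrow> bool" where
  "act_hom A actA B actB f \<longleftrightarrow>
     f \<in> A \<rightarrow> B \<and> (\<forall>a\<in>A. \<forall>s. f (actA a s) = actB (f a) s)"

definition act_congruence :: "'a set \<Rightarrow> ('a \<Rightarrow> 's::monoid_mult \<Rightarrow> 'a) \<Rightarrow> 'a rel \<Rightarrow> bool" where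
  "act_congruence A act \<rho> \<longleftrightarrow>
     equiv A \<rho> \<and> (\<forall>a b s. (a, b) \<in> \<rho> \<longrightarrow> (act a s, act b s) \<in> \<rho>)"

definition artinian_act :: "'a set \<Rightarrow> ('a \<Rightarrow> 's::monoid_mult \<Rightarrow> 'a) \<Rightarrow> bool" where
  "artinian_act A act \<longleftrightarrow>
     (\<forall>\<rho> :: nat \<Rightarrow> 'a rel.
        (\<forall>n. act_congruence A act (\<rho> n)) \<and> (\<forall>n. \<rho> (Suc n) \<subseteq> \<rho> n) \<longrightarrow>
        (\<exists>N. \<forall>m\<ge>N. \<rho> m = \<rho> N))"

text \<open>Projective (test acts B, C range over acts whose elements live in the same type as A).\<close>
definition projective_act :: "'a set \<Rightarrow> ('a \<Rightarrow> 's::monoid_mult \<Rightarrow> 'a) \<Rightarrow> bool" where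
  "projective_act A act \<longleftrightarrow>
     (\<forall>(B :: 'a set) actB (C :: 'a set) actC g h.
        right_act B actB \<and> right_act C actC \<and>
        act_hom B actB C actC g \<and> g ` B = C \<and> act_hom A act C actC h \<longrightarrow>
        (\<exists>k. act_hom A act B actB k \<and> (\<forall>a\<in>A. g (k a) = h a)))"

text \<open>End(A_S): endomorphisms, represented as extensional functions on A, composed by
  compose A (so fg = f o g).\<close>
definition End_act :: "'a set \<Rightarrow> ('a \<Rightarrow> 's::monoid_mult \<Rightarrow> 'a) \<Rightarrow> ('a \<Rightarrow> 'a) set" where
  "End_act A act = {f. f \<in> extensional A \<and> act_hom A act A act f}"

definition principal_right_ideal :: "'a set \<Rightarrow> ('a \<Rightarrow> 'a) set \<Rightarrow> ('a \<Rightarrow> 'a) \<Rightarrow> ('a \<Rightarrow> 'a) set" where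
  "principal_right_ideal A T f = {compose A f g | g. g \<in> T}"

end

theory Submission
  imports Defs
begin

text \<open>Nonempty subacts B \<subseteq> C with the same Rees congruence coincide, so in an artinian act
  every descending chain of subacts is stationary; this applies to the images f A of
  endomorphisms. Projectivity lifts any g with g A \<subseteq> f A through the epimorphism
  f : A \<rightarrow> f A, giving g = f k with k \<in> T; hence g T \<subseteq> f T iff g A \<subseteq> f A, and the chain
  of principal right ideals stabilises together with the chain of images.\<close>

definition subact :: "'a set \<Rightarrow> ('a \<Rightarrow> 's::monoid_mult \<Rightarrow> 'a) \<Rightarrow> 'a set \<Rightarrow> bool" where
  "subact A act B \<longleftrightarrow> B \<subseteq> A \<and> (\<forall>b\<in>B. \<forall>s. act b s \<in> B)"

definition rees_rel :: "'a set \<Rightarrow> 'a set \<Rightarrow> 'a rel" where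
  "rees_rel A B = Id_on A \<union> B \<times> B"

lemma right_act_subact:
  assumes "right_act A act" "subact A act B"
  shows "right_act B act"
  using assms unfolding right_act_def subact_def by blast

lemma subact_image:
  assumes "right_act A act" "act_hom A act A act f"
  shows "subact A act (f ` A)"
proof -
  have "act (f a) s \<in> f ` A" if "a \<in> A" for a s
  proof -
    have "act (f a) s = f (act a s)" using assms(2) that unfolding act_hom_def by simp
    moreover have "act a s \<in> A" using assms(1) that unfolding right_act_def by simp
    ultimately show ?thesis by simp
  qed
  moreover have "f ` A \<subseteq> A" using assms(2) unfolding act_hom_def by auto
  ultimately show ?thesis unfolding subact_def by blast
qed

lemma act_congruence_rees_rel:
  assumes "right_act A act" "subact A act B"
  shows "act_congruence A act (rees_rel A B)"
proof -
  have "B \<subseteq> A" using assms(2) unfolding subact_def by simp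
  then have "equiv A (rees_rel A B)"
    unfolding rees_rel_def equiv_def refl_on_def sym_def trans_def by blast
  moreover have "(act a s, act b s) \<in> rees_rel A B" if "(a, b) \<in> rees_rel A B" for a b s
    using that assms unfolding rees_rel_def right_act_def subact_def by auto
  ultimately show ?thesis unfolding act_congruence_def by blast
qed

lemma rees_rel_eq_imp_eq:
  assumes "rees_rel A B = rees_rel A C" "B \<subseteq> C" "B \<noteq> {}"
  shows "B = C"
proof
  show "C \<subseteq> B"
  proof
    fix c assume "c \<in> C"
    obtain b where "b \<in> B" using assms(3) by blast
    then have "(c, b) \<in> rees_rel A B" using \<open>c \<in> C\<close> assms(1,2) unfolding rees_rel_def by blast
    then show "c \<in> B" using \<open>b \<in> B\<close> unfolding rees_rel_def by blast
  qed
qed (fact assms(2))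

lemma artinian_act_subact_chain_stable:
  assumes "right_act A act" "artinian_act A act"
    and "\<And>n. subact A act (B n)" "\<And>n. B (Suc n) \<subseteq> B n"
  shows "\<exists>N. \<forall>m\<ge>N. B m = B N"
proof -
  have antimono: "B m \<subseteq> B n" if "n \<le> m" for m n
    using lift_Suc_antimono_le[of B, OF assms(4) that] .
  show ?thesis
  proof (cases "\<exists>n. B n = {}")
    case True
    then obtain n where "B n = {}" by blast
    then show ?thesis using antimono by blast
  next
    case False
    have "act_congruence A act (rees_rel A (B n))" for n
      using act_congruence_rees_rel[OF assms(1,3)] .
    moreover have "rees_rel A (B (Suc n)) \<subseteq> rees_rel A (B n)" for n
      using assms(4) unfolding rees_rel_def by blast
    ultimately obtain N where N: "\<forall>m\<ge>N. rees_rel A (B m) = rees_rel A (B N)"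
      using assms(2)[unfolded artinian_act_def, rule_format, of "\<lambda>n. rees_rel A (B n)"] by blast
    have "B m = B N" if "m \<ge> N" for m
    proof (rule rees_rel_eq_imp_eq)
      show "rees_rel A (B m) = rees_rel A (B N)" using N that by blast
    qed (use antimono that False in auto)
    then show ?thesis by blast
  qed
qed

lemma End_act_Pi: "g \<in> End_act A act \<Longrightarrow> g \<in> A \<rightarrow> A"
  unfolding End_act_def act_hom_def by auto

lemma restrict_id_in_End_act: "right_act A act \<Longrightarrow> (\<lambda>x\<in>A. x) \<in> End_act A act"
  unfolding End_act_def act_hom_def right_act_def by auto

lemma compose_in_End_act:
  assumes "right_act A act" "g \<in> End_act A act" "h \<in> End_act A act"
  shows "compose A g h \<in> End_act A act"
  using assms unfolding End_act_def act_hom_def right_act_def by (auto simp: compose_eq Pi_def)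

lemma mem_principal_right_ideal_self:
  assumes "right_act A act" "g \<in> End_act A act"
  shows "g \<in> principal_right_ideal A (End_act A act) g"
proof -
  have "compose A g (\<lambda>x\<in>A. x) = g"
    using assms(2) by (intro compose_Id) (auto simp: End_act_def act_hom_def)
  then show ?thesis
    unfolding principal_right_ideal_def using restrict_id_in_End_act[OF assms(1)] by force
qed

lemma principal_right_ideal_subset_iff:
  assumes "right_act A act" "g \<in> End_act A act"
  shows "principal_right_ideal A (End_act A act) g \<subseteq> principal_right_ideal A (End_act A act) h
    \<longleftrightarrow> g \<in> principal_right_ideal A (End_act A act) h"
proof
  assume "g \<in> principal_right_ideal A (End_act A act) h"
  then obtain g' where g': "g' \<in> End_act A act" "g = compose A h g'"
    unfolding principal_right_ideal_def by auto
  show "principal_right_ideal A (End_act A act) g \<subseteq> principal_right_ideal A (End_act A act) h"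
  proof
    fix x assume "x \<in> principal_right_ideal A (End_act A act) g"
    then obtain k where k: "k \<in> End_act A act" "x = compose A g k"
      unfolding principal_right_ideal_def by auto
    then have "x = compose A h (compose A g' k)"
      using g' compose_assoc[OF End_act_Pi[OF k(1)], of h g'] by simp
    then show "x \<in> principal_right_ideal A (End_act A act) h"
      unfolding principal_right_ideal_def using compose_in_End_act[OF assms(1) g'(1) k(1)] by auto
  qed
qed (use mem_principal_right_ideal_self[OF assms] in blast)

lemma image_subset_if_mem_principal_right_ideal:
  assumes "g \<in> principal_right_ideal A (End_act A act) f"
  shows "g ` A \<subseteq> f ` A"
proof -
  obtain k where "k \<in> End_act A act" "g = compose A f k"
    using assms unfolding principal_right_ideal_def by auto
  then show ?thesis using End_act_Pi by (fastforce simp: compose_eq)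
qed

lemma mem_principal_right_ideal_if_image_subset:
  assumes "right_act A act" "projective_act A act"
    and f: "f \<in> End_act A act" and g: "g \<in> End_act A act" and "g ` A \<subseteq> f ` A"
  shows "g \<in> principal_right_ideal A (End_act A act) f"
proof -
  have hom_f: "act_hom A act A act f" and hom_g: "act_hom A act A act g"
    using f g unfolding End_act_def by auto
  have "right_act (f ` A) act"
    using right_act_subact[OF assms(1) subact_image[OF assms(1) hom_f]] .
  moreover have "act_hom A act (f ` A) act f" "act_hom A act (f ` A) act g"
    using hom_f hom_g \<open>g ` A \<subseteq> f ` A\<close> unfolding act_hom_def by auto
  ultimately obtain k where k: "act_hom A act A act k" "\<forall>a\<in>A. f (k a) = g a"
    using assms(2)[unfolded projective_act_def, rule_format, of A act "f ` A" act f g] assms(1)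
    by blast
  have k_End: "restrict k A \<in> End_act A act"
    using k(1) assms(1) unfolding End_act_def act_hom_def right_act_def by auto
  have "compose A f (restrict k A) = g"
  proof (rule extensionalityI[of _ A])
    show "g \<in> extensional A" using g unfolding End_act_def by simp
  qed (use k(2) in \<open>auto simp: compose_eq\<close>)
  then show ?thesis unfolding principal_right_ideal_def using k_End by force
qed

lemma principal_right_ideal_subset_iff_image_subset:
  assumes "right_act A act" "projective_act A act" "f \<in> End_act A act" "g \<in> End_act A act"
  shows "principal_right_ideal A (End_act A act) g \<subseteq> principal_right_ideal A (End_act A act) f
    \<longleftrightarrow> g ` A \<subseteq> f ` A"
  unfolding principal_right_ideal_subset_iff[OF assms(1,4)]
  using image_subset_if_mem_principal_right_ideal mem_principal_right_ideal_if_image_subset[OF assms]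
  by blast

theorem mainTheorem19:
  fixes A :: "'a set" and act :: "'a \<Rightarrow> 's::monoid_mult \<Rightarrow> 'a"
  assumes "right_act A act"
    and "artinian_act A act"
    and "projective_act A act"
  shows "\<forall>f :: nat \<Rightarrow> ('a \<Rightarrow> 'a).
           (\<forall>n. f n \<in> End_act A act) \<and>
           (\<forall>n. principal_right_ideal A (End_act A act) (f (Suc n))
                  \<subseteq> principal_right_ideal A (End_act A act) (f n)) \<longrightarrow>
           (\<exists>N. \<forall>m\<ge>N. principal_right_ideal A (End_act A act) (f m)
                        = principal_right_ideal A (End_act A act) (f N))"
proof (intro allI impI)
  fix f :: "nat \<Rightarrow> ('a \<Rightarrow> 'a)"
  let ?I = "\<lambda>g. principal_right_ideal A (End_act A act) g"
  assume "(\<forall>n. f n \<in> End_act A act) \<and> (\<forall>n. ?I (f (Suc n)) \<subseteq> ?I (f n))"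
  then have f_End: "\<And>n. f n \<in> End_act A act" and chain: "\<And>n. ?I (f (Suc n)) \<subseteq> ?I (f n)"
    by blast+
  note ideal_iff = principal_right_ideal_subset_iff_image_subset[OF assms(1,3) f_End f_End]
  have subacts: "subact A act (f n ` A)" for n
    using subact_image[OF assms(1)] f_End[of n] unfolding End_act_def by blast
  have images: "f (Suc n) ` A \<subseteq> f n ` A" for n
    using ideal_iff[of "Suc n" n, THEN iffD1, OF chain] .
  obtain N where N: "\<forall>m\<ge>N. f m ` A = f N ` A"
    using artinian_act_subact_chain_stable[where B = "\<lambda>n. f n ` A", OF assms(1,2) subacts images]
    by blast
  have "?I (f m) = ?I (f N)" if "m \<ge> N" for m
  proof (rule subset_antisym)
    have "f m ` A = f N ` A" using N that by blast
    then show "?I (f m) \<subseteq> ?I (f N)" "?I (f N) \<subseteq> ?I (f m)"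
      using ideal_iff[of m N] ideal_iff[of N m] by simp_all
  qed
  then show "\<exists>N. \<forall>m\<ge>N. ?I (f m) = ?I (f N)" by blast
qed

end
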